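(* Let $p:X\to Y$ be a factor map between topological spaces and $\Delta=\{p^{-1}(y): y\in Y\}$. If $p$ has property (COMP), then $p$ has property (CONT).
   Context: A factor map $p:X\to Y$ is a surjective map such that $A\subset Y$ is open iff $p^{-1}(A)$ is open in $X$. A $\Delta$-map is a continuous map $h:X\to X$ such that for each $\omega\in\Delta$, $h(\omega)$ is contained in some element of $\Delta$; $\mathrm{End}(X,\Delta)$ is the monoid of all $\Delta$-maps and $\mathrm{End}(Y)=C(Y,Y)$ the monoid of continuous self-maps of $Y$. For $h\in\mathrm{End}(X,\Delta)$, $\psi(h):Y\to Y$ is the unique map with $p\circ h=\psi(h)\circ p$ (it is continuous). Property (COMP): for every compact $L\subset Y$ there is a compact $K\subset X$ with $p(K)=L$. Property (CONT): the map $\psi:\mathrm{End}(X,\Delta)\to\mathrm{End}(Y)$ is continuous with respect to the compact open topologies (generated by subbasic sets $\{f: f(K)\subset U\}$, $K$ compact, $U$ open). *)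

theory Defs
  imports "HOL-Analysis.Analysis"
begin

definition compact_open :: "'a topology \<Rightarrow> 'b topology \<Rightarrow> ('a \<Rightarrow> 'b) topology" where
  "compact_open X Y =
     subtopology
       (topology_generated_by {{f. f ` K \<subseteq> U} | K U. compactin X K \<and> openin Y U})
       {f. continuous_map X Y f}"

definition fibres :: "'a topology \<Rightarrow> 'b topology \<Rightarrow> ('a \<Rightarrow> 'b) \<Rightarrow> 'a set set" where
  "fibres X Y p = {{x \<in> topspace X. p x = y} | y. y \<in> topspace Y}"

definition delta_maps :: "'a topology \<Rightarrow> 'a set set \<Rightarrow> ('a \<Rightarrow> 'a) set" where
  "delta_maps X \<Delta> = {h. continuous_map X X h \<and> (\<forall>w\<in>\<Delta>. \<exists>w'\<in>\<Delta>. h ` w \<subseteq> w')}"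

text \<open>psi(h): the induced map Y -> Y with p o h = psi(h) o p (on Y; fixed as identity outside Y).\<close>
definition psi :: "'a topology \<Rightarrow> 'b topology \<Rightarrow> ('a \<Rightarrow> 'b) \<Rightarrow> ('a \<Rightarrow> 'a) \<Rightarrow> 'b \<Rightarrow> 'b" where
  "psi X Y p h y = (if y \<in> topspace Y then p (h (SOME x. x \<in> topspace X \<and> p x = y)) else y)"

definition has_COMP :: "'a topology \<Rightarrow> 'b topology \<Rightarrow> ('a \<Rightarrow> 'b) \<Rightarrow> bool" where
  "has_COMP X Y p \<longleftrightarrow> (\<forall>L. compactin Y L \<longrightarrow> (\<exists>K. compactin X K \<and> p ` K = L))"

definition has_CONT :: "'a topology \<Rightarrow> 'b topology \<Rightarrow> ('a \<Rightarrow> 'b) \<Rightarrow> bool" where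
  "has_CONT X Y p \<longleftrightarrow>
     continuous_map (subtopology (compact_open X X) (delta_maps X (fibres X Y p)))
                    (compact_open Y Y) (psi X Y p)"

end

theory Submission
  imports Defs
begin

text \<open>For a Delta-map h we have psi(h) o p = p o h. Given a subbasic open set
  {g. g(L) \<subseteq> V} of C(Y,Y), (COMP) yields a compact K with p(K) = L, and then psi(h) maps L
  into V iff h maps K into the open set p^-1(V). So the psi-preimage of a subbasic open set is
  the trace on the Delta-maps of a subbasic open set of C(X,X).\<close>

lemma UNIV_in_compact_open_subbasis:
  "UNIV \<in> {{f. f ` K \<subseteq> U} | K U. compactin X K \<and> openin Y U}"
  by (rule CollectI, rule exI[of _ "{}"], rule exI[of _ "{}"]) auto

lemma topspace_compact_open: "topspace (compact_open X Y) = {f. continuous_map X Y f}"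
  using UNIV_in_compact_open_subbasis[of X Y]
  unfolding compact_open_def by (auto simp: topspace_subtopology)

lemma openin_compact_open:
  assumes "compactin X K" and "openin Y U"
  shows "openin (compact_open X Y) {f. continuous_map X Y f \<and> f ` K \<subseteq> U}"
proof -
  have "openin (topology_generated_by {{f. f ` K \<subseteq> U} | K U. compactin X K \<and> openin Y U})
               {f. f ` K \<subseteq> U}"
    by (rule topology_generated_by_Basis) (use assms in blast)
  then have "openin (compact_open X Y) ({f. f ` K \<subseteq> U} \<inter> {f. continuous_map X Y f})"
    unfolding compact_open_def by (rule openin_subtopology_Int)
  then show ?thesis
    by (simp add: Collect_conj_eq Int_commute)
qed

lemma continuous_map_into_compact_open:
  assumes "\<And>t. t \<in> topspace T \<Longrightarrow> continuous_map Y Z (g t)"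
    and "\<And>L V. compactin Y L \<Longrightarrow> openin Z V \<Longrightarrow> openin T {t \<in> topspace T. g t ` L \<subseteq> V}"
  shows "continuous_map T (compact_open Y Z) g"
proof -
  let ?S = "{{f. f ` L \<subseteq> V} | L V. compactin Y L \<and> openin Z V}"
  have "continuous_map T (topology_generated_by ?S) g"
  proof (rule continuous_on_generated_topo)
    show "openin T (g -` A \<inter> topspace T)" if "A \<in> ?S" for A
    proof -
      obtain L V where "A = {f. f ` L \<subseteq> V}" "compactin Y L" "openin Z V"
        using \<open>A \<in> ?S\<close> by blast
      moreover have "g -` {f. f ` L \<subseteq> V} \<inter> topspace T = {t \<in> topspace T. g t ` L \<subseteq> V}"
        by blast
      ultimately show ?thesis
        using assms(2) by simp
    qed
  next
    show "g ` topspace T \<subseteq> \<Union> ?S"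
      using UNIV_in_compact_open_subbasis[of Y Z] by blast
  qed
  then show ?thesis
    unfolding compact_open_def continuous_map_in_subtopology using assms(1) by blast
qed

lemma psi_apply:
  assumes "quotient_map X Y p" and "h \<in> delta_maps X (fibres X Y p)" and "x \<in> topspace X"
  shows "psi X Y p h (p x) = p (h x)"
proof -
  have px: "p x \<in> topspace Y"
    using assms(1,3) quotient_imp_surjective_map by blast
  define x' where "x' = (SOME x'. x' \<in> topspace X \<and> p x' = p x)"
  have x': "x' \<in> topspace X \<and> p x' = p x"
    unfolding x'_def by (rule someI[of _ x]) (use assms(3) in auto)
  have "{z \<in> topspace X. p z = p x} \<in> fibres X Y p"
    unfolding fibres_def using px by blast
  then obtain y where "h ` {z \<in> topspace X. p z = p x} \<subseteq> {z \<in> topspace X. p z = y}"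
    using assms(2) unfolding delta_maps_def fibres_def by blast
  then have "p (h x) = p (h x')"
    using assms(3) x' by auto
  then show ?thesis
    unfolding psi_def using px x'_def by simp
qed

lemma continuous_map_psi:
  assumes q: "quotient_map X Y p" and h: "h \<in> delta_maps X (fibres X Y p)"
  shows "continuous_map Y Y (psi X Y p h)"
proof (rule continuous_compose_quotient_map[OF q])
  have "continuous_map X Y (p \<circ> h)"
    using h quotient_imp_continuous_map[OF q] unfolding delta_maps_def
    by (blast intro: continuous_map_compose)
  then show "continuous_map X Y (psi X Y p h \<circ> p)"
    by (rule continuous_map_eq) (simp add: psi_apply[OF q h])
qed

lemma psi_image_subset_iff:
  assumes q: "quotient_map X Y p" and h: "h \<in> delta_maps X (fibres X Y p)"
    and K: "K \<subseteq> topspace X"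
  shows "psi X Y p h ` p ` K \<subseteq> V \<longleftrightarrow> h ` K \<subseteq> {x \<in> topspace X. p x \<in> V}"
proof -
  have "continuous_map X X h"
    using h by (simp add: delta_maps_def)
  then have "h ` K \<subseteq> topspace X"
    using K continuous_map_image_subset_topspace by blast
  moreover have "psi X Y p h ` p ` K = p ` h ` K"
    unfolding image_image using K by (intro image_cong) (auto simp: psi_apply[OF q h])
  ultimately show ?thesis
    by (auto simp: image_subset_iff)
qed

lemma psi_preimage_image_subset:
  assumes q: "quotient_map X Y p" and K: "K \<subseteq> topspace X"
  shows "{h \<in> delta_maps X (fibres X Y p). psi X Y p h ` p ` K \<subseteq> V}
       = {f. continuous_map X X f \<and> f ` K \<subseteq> {x \<in> topspace X. p x \<in> V}}
         \<inter> delta_maps X (fibres X Y p)"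
proof (intro set_eqI iffI)
  fix h
  assume "h \<in> {h \<in> delta_maps X (fibres X Y p). psi X Y p h ` p ` K \<subseteq> V}"
  then have h: "h \<in> delta_maps X (fibres X Y p)" and "psi X Y p h ` p ` K \<subseteq> V"
    by auto
  with psi_image_subset_iff[OF q h K] h
  show "h \<in> {f. continuous_map X X f \<and> f ` K \<subseteq> {x \<in> topspace X. p x \<in> V}}
      \<inter> delta_maps X (fibres X Y p)"
    by (simp add: delta_maps_def)
next
  fix h
  assume "h \<in> {f. continuous_map X X f \<and> f ` K \<subseteq> {x \<in> topspace X. p x \<in> V}}
      \<inter> delta_maps X (fibres X Y p)"
  then have h: "h \<in> delta_maps X (fibres X Y p)" and "h ` K \<subseteq> {x \<in> topspace X. p x \<in> V}"
    by auto
  with psi_image_subset_iff[OF q h K]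
  show "h \<in> {h \<in> delta_maps X (fibres X Y p). psi X Y p h ` p ` K \<subseteq> V}"
    by simp
qed

theorem mainTheorem4:
  fixes X :: "'a topology" and Y :: "'b topology" and p :: "'a \<Rightarrow> 'b"
  assumes "quotient_map X Y p"
    and "has_COMP X Y p"
  shows "has_CONT X Y p"
  unfolding has_CONT_def
proof (rule continuous_map_into_compact_open)
  let ?\<Delta> = "delta_maps X (fibres X Y p)"
  have D: "topspace (subtopology (compact_open X X) ?\<Delta>) = ?\<Delta>"
    by (auto simp: topspace_subtopology topspace_compact_open delta_maps_def)
  then show "continuous_map Y Y (psi X Y p h)"
    if "h \<in> topspace (subtopology (compact_open X X) ?\<Delta>)" for h
    using continuous_map_psi[OF assms(1)] that by blast
  fix L V
  assume "compactin Y L" and "openin Y V"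
  then obtain K where K: "compactin X K" "p ` K = L"
    using assms(2) unfolding has_COMP_def by blast
  have "openin X {x \<in> topspace X. p x \<in> V}"
    using quotient_imp_continuous_map[OF assms(1)] \<open>openin Y V\<close>
    by (rule openin_continuous_map_preimage)
  then show "openin (subtopology (compact_open X X) ?\<Delta>)
      {h \<in> topspace (subtopology (compact_open X X) ?\<Delta>). psi X Y p h ` L \<subseteq> V}"
    unfolding D K(2)[symmetric] psi_preimage_image_subset[OF assms(1) compactin_subset_topspace[OF K(1)]]
    by (intro openin_subtopology_Int openin_compact_open K(1))
qed

end
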